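(* Let $\gamma(x)=\sum_{k\ge2}\gamma_kx^{k-1}$ be a degree distribution with average degree $a$ and maximal degree $d\ge3$, and let $i$ be an integer with $1<i<d$ such that $\gamma_i>0$ and $\gamma_{i+2}>0$. For $\beta>0$ define $$\hat\gamma(x)=\gamma(x)+\beta x^{i}-\Bigl\{\frac{i}{2(i+1)}\beta x^{i-1}+\frac{i+2}{2(i+1)}\beta x^{i+1}\Bigr\}.$$ Then for every sufficiently small $\beta>0$, $\hat\gamma$ is a degree distribution with the same average degree $a$ and the same maximal degree $d$, and moreover $\gamma(x)<\hat\gamma(x)$ for $\frac{i}{i+2}<x<1$ and $\gamma(x)>\hat\gamma(x)$ for $0<x<\frac{i}{i+2}$.
   Context: A degree distribution is a polynomial $\gamma(x)=\sum_{k\ge2}\gamma_kx^{k-1}$ with $\gamma_k\ge0$ and $\sum_k\gamma_k=1$; its maximal degree is the largest $k$ with $\gamma_k\ne0$, and its average degree $a$ is defined by $1/a=\int_0^1\gamma(x)\,dx$. *)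

theory Defs
  imports "HOL-Analysis.Analysis" "HOL-Computational_Algebra.Polynomial"
begin

text \<open>A degree distribution gamma(x) = sum_{k>=2} gamma_k x^(k-1) is represented as a real
polynomial p with coeff p (k - 1) = gamma_k; thus gamma_k = 0 for k < 2 means coeff p 0 = 0.\<close>

definition gamma_coeff :: "real poly \<Rightarrow> nat \<Rightarrow> real" where
  "gamma_coeff p k = (if k = 0 then 0 else coeff p (k - 1))"

definition degree_distribution :: "real poly \<Rightarrow> bool" where
  "degree_distribution p \<longleftrightarrow>
     (\<forall>k. k < 2 \<longrightarrow> gamma_coeff p k = 0) \<and>
     (\<forall>k. gamma_coeff p k \<ge> 0) \<and>
     (\<Sum>k\<le>degree p + 1. gamma_coeff p k) = 1"

definition max_degree :: "real poly \<Rightarrow> nat" where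
  "max_degree p = Max {k. gamma_coeff p k \<noteq> 0}"

definition avg_degree :: "real poly \<Rightarrow> real" where
  "avg_degree p = 1 / integral {0..1} (\<lambda>x. poly p x)"

end

theory Submission
  imports Defs
begin

text \<open>The perturbation \<open>x^i - c x^(i-1) - c' x^(i+1)\<close>, with \<open>c = i / (2 (i + 1))\<close> and
\<open>c' = (i + 2) / (2 (i + 1))\<close>, moves mass from the degrees \<open>i\<close> and \<open>i + 2\<close> to the degree
\<open>i + 1\<close>. Since \<open>c + c' = 1\<close> and \<open>c / i + c' / (i + 2) = 1 / (i + 1)\<close>, it vanishes at
\<open>x = 1\<close> and integrates to \<open>0\<close> over \<open>[0, 1]\<close>, so total mass and average degree are
preserved; it factors as \<open>c' x^(i-1) (1 - x) (x - i / (i + 2))\<close>, which gives the sign change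
at \<open>i / (i + 2)\<close>. For \<open>\<beta>\<close> below \<open>\<gamma>\<^sub>i\<close> and \<open>\<gamma>\<^sub>i\<^sub>+\<^sub>2\<close> no coefficient becomes negative and
none of the positive ones vanishes, so the maximal degree is unchanged.\<close>

lemma degree_distribution_iff:
  "degree_distribution p \<longleftrightarrow> coeff p 0 = 0 \<and> (\<forall>j. 0 \<le> coeff p j) \<and> poly p 1 = 1"
proof -
  have "(\<Sum>k\<le>degree p + 1. gamma_coeff p k) = gamma_coeff p 0 + (\<Sum>k\<le>degree p. gamma_coeff p (Suc k))"
    by (simp only: Suc_eq_plus1[symmetric] sum.atMost_Suc_shift)
  also have "\<dots> = poly p 1"
    by (simp add: gamma_coeff_def poly_altdef)
  finally show ?thesis
    unfolding degree_distribution_def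
    by (auto simp: gamma_coeff_def less_2_cases_iff split: if_splits)
qed

lemma degree_distribution_nonzero: "degree_distribution p \<Longrightarrow> p \<noteq> 0"
  by (auto simp: degree_distribution_iff)

lemma max_degree_eq:
  assumes "p \<noteq> 0"
  shows "max_degree p = degree p + 1"
  unfolding max_degree_def
proof (rule Max_eqI)
  show "k \<le> degree p + 1" if "k \<in> {k. gamma_coeff p k \<noteq> 0}" for k
    using that le_degree[of p "k - 1"] by (auto simp: gamma_coeff_def split: if_splits)
  then show "finite {k. gamma_coeff p k \<noteq> 0}"
    by (meson finite_atMost finite_subset subsetI atMost_iff)
  show "degree p + 1 \<in> {k. gamma_coeff p k \<noteq> 0}"
    using assms by (simp add: gamma_coeff_def)
qed

lemma has_integral_power_01: "((\<lambda>x::real. x ^ n) has_integral 1 / (real n + 1)) {0..1}"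
proof -
  have "((\<lambda>x::real. x ^ n) has_integral (1 ^ Suc n / Suc n - 0 ^ Suc n / Suc n)) {0..1}"
  proof (rule fundamental_theorem_of_calculus)
    show "((\<lambda>x. x ^ Suc n / Suc n) has_vector_derivative x ^ n) (at x within {0..1})" for x :: real
      unfolding has_real_derivative_iff_has_vector_derivative[symmetric]
      by (intro derivative_eq_intros) auto
  qed simp
  then show ?thesis by (simp add: add.commute)
qed

lemma avg_degree_add:
  assumes "(poly r has_integral 0) {0..1}"
  shows "avg_degree (p + r) = avg_degree p"
proof -
  have "(poly p has_integral integral {0..1} (poly p)) {0..1}"
    by (intro integrable_integral integrable_continuous_interval continuous_intros)
  from has_integral_add[OF this assms] have "integral {0..1} (poly (p + r)) = integral {0..1} (poly p)"
    by (simp add: integral_unique poly_add[abs_def] del: poly_add)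
  then show ?thesis by (simp add: avg_degree_def del: poly_add)
qed

definition concentrate :: "nat \<Rightarrow> real poly" where
  "concentrate i = monom 1 i
     - (monom (real i / (2 * (real i + 1))) (i - 1) + monom ((real i + 2) / (2 * (real i + 1))) (i + 1))"

lemma coeff_concentrate:
  "coeff (concentrate i) j
    = (if j = i then 1 else 0) - (if j = i - 1 then real i / (2 * (real i + 1)) else 0)
      - (if j = i + 1 then (real i + 2) / (2 * (real i + 1)) else 0)"
  by (simp add: concentrate_def)

lemma degree_concentrate_le: "degree (concentrate i) \<le> i + 1"
  by (auto simp: concentrate_def intro!: degree_diff_le degree_add_le degree_monom_le[THEN order_trans])

lemma poly_concentrate:
  assumes "1 \<le> i"
  shows "poly (concentrate i) x
    = (real i + 2) / (2 * (real i + 1)) * x ^ (i - 1) * (1 - x) * (x - real i / (real i + 2))"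
proof -
  obtain k where i: "i = Suc k" using assms by (cases i) auto
  have "real k + 3 \<noteq> 0" "real k + 2 \<noteq> 0" by linarith+
  then show ?thesis unfolding concentrate_def i
    by (simp add: poly_monom power_Suc divide_simps) algebra
qed

lemma poly_concentrate_pos:
  assumes "1 \<le> i" "real i / (real i + 2) < x" "x < 1"
  shows "0 < poly (concentrate i) x"
proof -
  have "0 < x" using assms(2) by (smt (verit) divide_nonneg_nonneg of_nat_0_le_iff)
  then show ?thesis using assms by (simp add: poly_concentrate)
qed

lemma poly_concentrate_neg:
  assumes "1 \<le> i" "0 < x" "x < real i / (real i + 2)"
  shows "poly (concentrate i) x < 0"
proof -
  have "x < 1" using assms(3) by (smt (verit) divide_less_eq_1_pos of_nat_0_le_iff)
  then have "0 < (real i + 2) / (2 * (real i + 1)) * x ^ (i - 1) * (1 - x)" using assms(2) by simp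
  then show ?thesis unfolding poly_concentrate[OF assms(1)] by (rule mult_pos_neg) (use assms(3) in simp)
qed

lemma has_integral_concentrate:
  assumes "1 \<le> i"
  shows "(poly (concentrate i) has_integral 0) {0..1}"
proof -
  define c1 where "c1 = real i / (2 * (real i + 1))"
  define c2 where "c2 = (real i + 2) / (2 * (real i + 1))"
  have "poly (concentrate i) = (\<lambda>x. x ^ i - (c1 * x ^ (i - 1) + c2 * x ^ (i + 1)))"
    by (simp add: concentrate_def poly_monom c1_def c2_def fun_eq_iff)
  moreover have "((\<lambda>x. x ^ i - (c1 * x ^ (i - 1) + c2 * x ^ (i + 1))) has_integral
      1 / (real i + 1) - (c1 * (1 / (real (i - 1) + 1)) + c2 * (1 / (real (i + 1) + 1)))) {0..1}"
    by (intro has_integral_diff has_integral_add has_integral_mult_right has_integral_power_01)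
  moreover have "1 / (real i + 1) - (c1 * (1 / (real (i - 1) + 1)) + c2 * (1 / (real (i + 1) + 1))) = 0"
    using assms by (simp add: c1_def c2_def of_nat_diff field_simps)
  ultimately show ?thesis by simp
qed

lemma avg_degree_add_concentrate:
  assumes "1 \<le> i"
  shows "avg_degree (p + smult \<beta> (concentrate i)) = avg_degree p"
  using has_integral_mult_right[OF has_integral_concentrate[OF assms], of \<beta>]
  by (intro avg_degree_add) (simp add: poly_smult[abs_def])

lemma coeff_add_smult_nonneg:
  fixes p r :: "real poly"
  assumes "0 \<le> \<beta>" "-1 \<le> coeff r j" "coeff r j < 0 \<Longrightarrow> \<beta> < coeff p j" "0 \<le> coeff p j"
  shows "0 \<le> coeff (p + smult \<beta> r) j"
    and "0 < coeff p j \<Longrightarrow> 0 < coeff (p + smult \<beta> r) j"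
proof -
  have "0 \<le> \<beta> * coeff r j \<or> 0 < coeff (p + smult \<beta> r) j"
  proof (cases "coeff r j < 0")
    case True
    then have "- \<beta> \<le> \<beta> * coeff r j" using mult_left_mono[OF assms(2,1)] by simp
    with assms(3)[OF True] show ?thesis by simp
  qed (use assms(1) in simp)
  then show "0 \<le> coeff (p + smult \<beta> r) j" "0 < coeff p j \<Longrightarrow> 0 < coeff (p + smult \<beta> r) j"
    using assms(4) by auto
qed

lemma degree_distribution_add_concentrate:
  assumes "degree_distribution p" "1 < i" "0 < \<beta>" "\<beta> < coeff p (i - 1)" "\<beta> < coeff p (i + 1)"
  shows "degree_distribution (p + smult \<beta> (concentrate i))"
    and "max_degree (p + smult \<beta> (concentrate i)) = max_degree p"
proof -
  let ?q = "p + smult \<beta> (concentrate i)"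
  have p: "coeff p 0 = 0" "\<And>j. 0 \<le> coeff p j" "poly p 1 = 1"
    using assms(1) by (simp_all add: degree_distribution_iff)
  have "-1 \<le> coeff (concentrate i) j" for j
    by (auto simp: coeff_concentrate field_simps)
  moreover have "\<beta> < coeff p j" if "coeff (concentrate i) j < 0" for j
    using that assms(2,4,5) by (auto simp: coeff_concentrate split: if_splits)
  ultimately have q_nonneg: "0 \<le> coeff ?q j"
    and q_pos: "0 < coeff p j \<Longrightarrow> 0 < coeff ?q j" for j
    using coeff_add_smult_nonneg[OF less_imp_le[OF assms(3)] _ _ p(2)] by blast+
  have "coeff ?q 0 = 0" using p(1) assms(2) by (simp add: coeff_concentrate)
  moreover have "poly ?q 1 = 1" using p(3) assms(2) by (simp add: poly_concentrate)
  ultimately show "degree_distribution ?q" using q_nonneg by (simp add: degree_distribution_iff)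
  have "i + 1 \<le> degree p" using assms(3,5) by (intro le_degree) simp
  then have "degree ?q \<le> degree p"
    by (meson degree_add_le degree_concentrate_le degree_smult_le order.refl order.trans)
  moreover have "p \<noteq> 0" using assms(1) by (rule degree_distribution_nonzero)
  then have "0 < coeff ?q (degree p)" using p(2)[of "degree p"] by (intro q_pos) (simp add: order_less_le)
  then have "?q \<noteq> 0" and "degree p \<le> degree ?q" by (metis coeff_0 less_irrefl, simp add: le_degree)
  ultimately show "max_degree ?q = max_degree p" using \<open>p \<noteq> 0\<close> by (simp add: max_degree_eq)
qed

theorem lemma8:
  fixes p :: "real poly" and i :: nat
  assumes "degree_distribution p"
    and "max_degree p \<ge> 3"
    and "1 < i" and "i < max_degree p"
    and "gamma_coeff p i > 0" and "gamma_coeff p (i + 2) > 0"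
  shows "\<exists>\<beta>0>0. \<forall>\<beta>. 0 < \<beta> \<and> \<beta> < \<beta>0 \<longrightarrow>
           (let q = p + monom \<beta> i
                    - (monom (real i / (2 * (real i + 1)) * \<beta>) (i - 1)
                       + monom ((real i + 2) / (2 * (real i + 1)) * \<beta>) (i + 1))
            in degree_distribution q \<and>
               avg_degree q = avg_degree p \<and>
               max_degree q = max_degree p \<and>
               (\<forall>x. real i / (real i + 2) < x \<and> x < 1 \<longrightarrow> poly p x < poly q x) \<and>
               (\<forall>x. 0 < x \<and> x < real i / (real i + 2) \<longrightarrow> poly p x > poly q x))"
proof -
  let ?\<beta>0 = "min (coeff p (i - 1)) (coeff p (i + 1))"
  have q: "p + monom \<beta> i - (monom (real i / (2 * (real i + 1)) * \<beta>) (i - 1)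
      + monom ((real i + 2) / (2 * (real i + 1)) * \<beta>) (i + 1)) = p + smult \<beta> (concentrate i)" for \<beta>
    by (simp add: concentrate_def smult_diff_right smult_add_right smult_monom mult.commute)
  have "0 < ?\<beta>0" using assms(3,5,6) by (simp add: gamma_coeff_def)
  moreover have "degree_distribution (p + smult \<beta> (concentrate i))"
    and "max_degree (p + smult \<beta> (concentrate i)) = max_degree p"
    if "0 < \<beta>" "\<beta> < ?\<beta>0" for \<beta>
    using degree_distribution_add_concentrate[OF assms(1,3)] that by simp_all
  ultimately show ?thesis
    unfolding q Let_def
    using assms(3) avg_degree_add_concentrate poly_concentrate_pos poly_concentrate_neg
    by (intro exI[of _ ?\<beta>0]) (auto simp: mult_less_0_iff)
qed

end
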